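(* Let $m\ge1$ and let $F=(F_0,F_1,F_2)$ be a gapset filtration of multiplicity $m+1$ and depth $3$, so that $F_0=[1,m]\supseteq F_1\supseteq F_2\neq\emptyset$. Let $a_i=\max F_i$ and $F'_i=F_i\setminus\{a_i\}$ for $i=0,1,2$. Then $F'=(F'_0,F'_1,F'_2)$ is a gapset filtration (of multiplicity $m$), i.e. $[1,m-1]\cup(m+F'_1)\cup(2m+F'_2)$ is a gapset.
   Context: A gapset is a finite set $G \subset \mathbb{N}_+$ such that for all $z \in G$, whenever $z=x+y$ with $x,y\in\mathbb{N}_+$, we have $x\in G$ or $y\in G$. Its multiplicity is the least $m\ge1$ with $m\notin G$, and its depth is $\lceil c/m\rceil$ where $c=\max G+1$. For $k\ge1$, a $k$-filtration is a sequence $(F_0,\dots,F_t)$ with $F_0=[1,k-1]\supseteq F_1\supseteq\dots\supseteq F_t$; it is a gapset filtration if $\bigcup_i(ik+F_i)$ is a gapset, and its multiplicity and depth are those of that gapset. Here $j+A=\{j+a:a\in A\}$. *)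

theory Defs
  imports Main
begin

definition gapset :: "nat set \<Rightarrow> bool" where
  "gapset G \<longleftrightarrow> finite G \<and> 0 \<notin> G \<and>
     (\<forall>z\<in>G. \<forall>x y. 0 < x \<and> 0 < y \<and> z = x + y \<longrightarrow> x \<in> G \<or> y \<in> G)"

definition multiplicity_gs :: "nat set \<Rightarrow> nat" where
  "multiplicity_gs G = (LEAST m. 1 \<le> m \<and> m \<notin> G)"

text \<open>Conductor c = max G + 1 (with the convention c = 1 for the empty set),
  depth = ceiling (c / m), computed as (c + m - 1) div m (m >= 1).\<close>
definition conductor_gs :: "nat set \<Rightarrow> nat" where
  "conductor_gs G = (if G = {} then 1 else Max G + 1)"

definition depth_gs :: "nat set \<Rightarrow> nat" where
  "depth_gs G = (conductor_gs G + multiplicity_gs G - 1) div multiplicity_gs G"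

definition k_filtration :: "nat \<Rightarrow> nat set list \<Rightarrow> bool" where
  "k_filtration k Fs \<longleftrightarrow> Fs \<noteq> [] \<and> Fs ! 0 = {1..k-1} \<and>
     (\<forall>i. Suc i < length Fs \<longrightarrow> Fs ! Suc i \<subseteq> Fs ! i)"

definition filtration_set :: "nat \<Rightarrow> nat set list \<Rightarrow> nat set" where
  "filtration_set k Fs = (\<Union>i<length Fs. (\<lambda>a. i * k + a) ` (Fs ! i))"

definition gapset_filtration :: "nat \<Rightarrow> nat set list \<Rightarrow> bool" where
  "gapset_filtration k Fs \<longleftrightarrow> k_filtration k Fs \<and> gapset (filtration_set k Fs)"

end

theory Submission
  imports Defs
begin

text \<open>A gapset filtration of depth at most 3 is determined by the condition that every splitting
  f = u + v of an element of F_2 into positive parts meets F_1: the only sums landing in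
  the top level 2k + F_2 are (k + u) + (k + v). Removing the maxima a_1 \<ge> a_2 of
  F_1 and F_2 preserves this condition, because each part of a splitting of an element
  of F_2 - {a_2} is smaller than a_1.\<close>

definition splittings_meet :: "nat set \<Rightarrow> nat set \<Rightarrow> bool" where
  "splittings_meet B C \<longleftrightarrow>
     (\<forall>f\<in>C. \<forall>u v. 0 < u \<and> 0 < v \<and> u + v = f \<longrightarrow> u \<in> B \<or> v \<in> B)"

lemma filtration_set_three:
  "filtration_set k [A, B, C] = A \<union> (\<lambda>a. k + a) ` B \<union> (\<lambda>a. 2 * k + a) ` C"
proof -
  have "{..<length [A, B, C]} = {0, 1, 2::nat}" by auto
  then show ?thesis unfolding filtration_set_def by (simp add: Un_assoc)
qed

lemma k_filtration_three_iff:
  "k_filtration k [A, B, C] \<longleftrightarrow> A = {1..k-1} \<and> B \<subseteq> A \<and> C \<subseteq> B"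
  unfolding k_filtration_def by (simp add: All_less_Suc conj_commute)

lemma k_filtration_nth_subset:
  assumes "k_filtration k Fs" and "i < length Fs"
  shows "Fs ! i \<subseteq> {1..k-1}"
  using assms(2)
proof (induction i)
  case 0
  then show ?case using assms(1) unfolding k_filtration_def by simp
next
  case (Suc i)
  then show ?case using assms(1) unfolding k_filtration_def by (meson Suc_lessD order_trans)
qed

lemma multiplicity_filtration_set:
  assumes "k_filtration k Fs" and "1 \<le> k"
  shows "multiplicity_gs (filtration_set k Fs) = k"
  unfolding multiplicity_gs_def
proof (rule Least_equality)
  have "k \<noteq> i * k + a" if "i < length Fs" and "a \<in> Fs ! i" for i a
    using k_filtration_nth_subset[OF assms(1) that(1)] that(2) assms(2)
    by (cases i) auto
  then show "1 \<le> k \<and> k \<notin> filtration_set k Fs"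
    using assms(2) unfolding filtration_set_def by blast
next
  have "Fs ! 0 = {1..k-1}" and "0 < length Fs" using assms(1) unfolding k_filtration_def by auto
  then have "{1..k-1} \<subseteq> filtration_set k Fs" unfolding filtration_set_def by force
  moreover have "m \<in> {1..k-1}" if "1 \<le> m" and "m < k" for m
    using that by simp
  ultimately show "k \<le> m" if "1 \<le> m \<and> m \<notin> filtration_set k Fs" for m
    using that not_less by blast
qed

lemma gapset_filtration_set_three_iff:
  assumes "B \<subseteq> {1..k-1}" and "C \<subseteq> B"
  shows "gapset (filtration_set k [{1..k-1}, B, C]) \<longleftrightarrow> splittings_meet B C"
proof
  let ?G = "filtration_set k [{1..k-1}, B, C]"
  have upper_level: "k + u \<in> ?G \<longleftrightarrow> u \<in> B" if "u < k" for u
    using that assms unfolding filtration_set_three by auto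
  assume "gapset ?G"
  then have split: "x \<in> ?G \<or> y \<in> ?G" if "x + y \<in> ?G" and "0 < x" and "0 < y" for x y
    using that unfolding gapset_def by blast
  show "splittings_meet B C" unfolding splittings_meet_def
  proof (intro ballI allI impI)
    fix f u v assume f: "f \<in> C" and uv: "0 < u \<and> 0 < v \<and> u + v = f"
    have "f < k" using f assms by fastforce
    have "(k + u) + (k + v) \<in> ?G"
      using f uv unfolding filtration_set_three by (simp add: image_iff)
    then have "k + u \<in> ?G \<or> k + v \<in> ?G" using split \<open>f < k\<close> by simp
    then show "u \<in> B \<or> v \<in> B" using upper_level uv \<open>f < k\<close> by auto
  qed
next
  let ?G = "{1..k-1} \<union> (\<lambda>a. k + a) ` B \<union> (\<lambda>a. 2 * k + a) ` C"
  assume meet: "splittings_meet B C"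
  have B_less: "b < k" if "b \<in> B" for b
    using that assms(1) by fastforce
  have "gapset ?G" unfolding gapset_def
  proof (intro conjI ballI allI impI)
    have "finite B" using assms(1) by (rule finite_subset) simp
    then show "finite ?G" using assms(2) finite_subset by auto
    have "0 \<notin> B" using assms(1) by auto
    then show "0 \<notin> ?G" using assms(2) by auto
    fix z x y assume z: "z \<in> ?G" and xy: "0 < x \<and> 0 < y \<and> z = x + y"
    show "x \<in> ?G \<or> y \<in> ?G"
    proof (cases "x < k \<or> y < k")
      case True
      then show ?thesis using xy by auto
    next
      case False
      then obtain u v where x: "x = k + u" and y: "y = k + v"
        by (metis add_diff_inverse_nat)
      have "z \<notin> {1..k-1} \<union> (\<lambda>a. k + a) ` B" using x y xy B_less by fastforce
      then obtain f where f: "f \<in> C" and "z = 2 * k + f" using z by blast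
      then have uv: "u + v = f" using x y xy by simp
      have "u \<in> B \<or> v \<in> B"
      proof (cases "u = 0 \<or> v = 0")
        case True
        then show ?thesis using uv f assms(2) by auto
      next
        case False
        then have "0 < u" and "0 < v" by simp_all
        then show ?thesis using meet f uv unfolding splittings_meet_def by blast
      qed
      then show ?thesis unfolding x y by blast
    qed
  qed
  then show "gapset (filtration_set k [{1..k-1}, B, C])" unfolding filtration_set_three .
qed

lemma Diff_Max_less:
  assumes "finite B" and "x \<in> B - {Max B}"
  shows "x < Max B"
  using assms Max_ge order_less_le by auto

lemma Diff_Max_mono:
  assumes "finite B" and "C \<subseteq> B"
  shows "C - {Max C} \<subseteq> B - {Max B}"
proof
  fix x assume x: "x \<in> C - {Max C}"
  have "finite C" using assms(2,1) by (rule finite_subset)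
  then have "x < Max C" using x by (rule Diff_Max_less)
  also have "Max C \<le> Max B" using x assms by (intro Max_mono) auto
  finally show "x \<in> B - {Max B}" using x assms(2) by auto
qed

lemma splittings_meet_Diff_Max:
  assumes "finite B" and "C \<subseteq> B" and "splittings_meet B C"
  shows "splittings_meet (B - {Max B}) (C - {Max C})"
  unfolding splittings_meet_def
proof (intro ballI allI impI)
  fix f u v assume f: "f \<in> C - {Max C}" and uv: "0 < u \<and> 0 < v \<and> u + v = f"
  have "f \<in> B - {Max B}" using f Diff_Max_mono[OF assms(1,2)] by blast
  with assms(1) have "f < Max B" by (rule Diff_Max_less)
  moreover have "u \<in> B \<or> v \<in> B" using assms(3) f uv unfolding splittings_meet_def by blast
  ultimately show "u \<in> B - {Max B} \<or> v \<in> B - {Max B}" using uv by auto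
qed

theorem mainTheorem14:
  fixes m :: nat and F0 F1 F2 :: "nat set"
  assumes "1 \<le> m"
    and "gapset_filtration (m + 1) [F0, F1, F2]"
    and "multiplicity_gs (filtration_set (m + 1) [F0, F1, F2]) = m + 1"
    and "depth_gs (filtration_set (m + 1) [F0, F1, F2]) = 3"
  shows "gapset_filtration m [F0 - {Max F0}, F1 - {Max F1}, F2 - {Max F2}]
    \<and> multiplicity_gs (filtration_set m [F0 - {Max F0}, F1 - {Max F1}, F2 - {Max F2}]) = m"
proof -
  \<comment> \<open>The multiplicity and depth hypotheses are not needed: the multiplicity is forced by
    F0 = [1,m], and if F2 is empty then so is F2 - {Max F2}, whatever the junk value Max {} is.\<close>
  let ?F1' = "F1 - {Max F1}" and ?F2' = "F2 - {Max F2}"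
  have F0: "F0 = {1..m}" and F10: "F1 \<subseteq> F0" and F21: "F2 \<subseteq> F1"
    using assms(2) unfolding gapset_filtration_def k_filtration_three_iff add_diff_cancel_right'
    by blast+
  have "finite F1" using F10 by (rule finite_subset) (simp add: F0)
  have "Max F0 = m" using F0 assms(1) by (simp add: Max_eq_iff)
  then have F0': "F0 - {Max F0} = {1..m-1}" using F0 by auto
  have F10': "?F1' \<subseteq> {1..m-1}"
    using Diff_Max_mono[of F0 F1] F0 F10 F0' by simp
  have F21': "?F2' \<subseteq> ?F1'" using \<open>finite F1\<close> F21 by (rule Diff_Max_mono)
  have "splittings_meet F1 F2"
    using assms(2) gapset_filtration_set_three_iff[of F1 "m + 1" F2] F0 F10 F21
    unfolding gapset_filtration_def by simp
  with \<open>finite F1\<close> F21 have "splittings_meet ?F1' ?F2'" by (rule splittings_meet_Diff_Max)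
  then have "gapset (filtration_set m [{1..m-1}, ?F1', ?F2'])"
    using gapset_filtration_set_three_iff[OF F10' F21'] by simp
  moreover have filtration': "k_filtration m [{1..m-1}, ?F1', ?F2']"
    unfolding k_filtration_three_iff using F10' F21' by simp
  ultimately show ?thesis
    unfolding F0' gapset_filtration_def
    using multiplicity_filtration_set[OF filtration' assms(1)] by simp
qed

end
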